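(* Let $[x]t$ be a normal linear lambda term with exactly one free variable $x$. Then exactly one of the following holds: (1) $[x]t$ is the identity term, i.e. $t = x$; (2) $[x]t$ is function-open, i.e. $x(u)$ is a subterm of $t$ for some $u$; (3) $[x]t$ is value-open, i.e. $u(x)$ is a subterm of $t$ for some $u$.
   Context: Lambda skeletons: graded sets $\mathrm{SLam}(i)$, least such that $\_ \in \mathrm{SLam}(1)$; $p\in\mathrm{SLam}(j), q\in\mathrm{SLam}(k)\Rightarrow p(q)\in\mathrm{SLam}(j+k)$; $p\in\mathrm{SLam}(i+1)\Rightarrow \lambda\_.p\in\mathrm{SLam}(i)$. A linear lambda term with free variables $\Gamma$ decorating $p$, written $[\Gamma]t\in\Lambda_1(p)$, is defined by the rules: $[x]x\in\Lambda_1(\_)$; from $[\Gamma]t\in\Lambda_1(p)$, $[\Delta]u\in\Lambda_1(q)$ infer $[\Gamma,\Delta]t(u)\in\Lambda_1(p(q))$; from $[x,\Gamma]t\in\Lambda_1(p)$ infer $[\Gamma]\lambda x.t\in\Lambda_1(\lambda\_.p)$; from $[\Gamma,y,x,\Delta]t\in\Lambda_1(p)$ infer $[\Gamma,x,y,\Delta]t\in\Lambda_1(p)$ (so every variable is used exactly once). A linear term is normal if its skeleton $p$ of degree $i$ lies in $\mathrm{SNF}(i)$, where $\mathrm{SNeu}(i)$, $\mathrm{SNF}(i)$ are defined by the rules (v) $\_\in\mathrm{SNeu}(1)$; (a) $p\in\mathrm{SNeu}(j)$, $q\in\mathrm{SNF}(k)\Rightarrow p(q)\in\mathrm{SNeu}(j+k)$;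 (s) $p\in\mathrm{SNeu}(i)\Rightarrow p\in\mathrm{SNF}(i)$; ($\ell$) $p\in\mathrm{SNF}(i+1)\Rightarrow\lambda\_.p\in\mathrm{SNF}(i)$ (equivalently, the term contains no subterm $(\lambda y.v)(w)$). *)

theory Defs
  imports Main
begin

datatype 'v lterm = Var 'v | App "'v lterm" "'v lterm" | Lam 'v "'v lterm"

datatype skel = Hole | SApp skel skel | SLam skel

inductive slam :: "nat \<Rightarrow> skel \<Rightarrow> bool" where
  slam_hole: "slam 1 Hole"
| slam_app: "slam j p \<Longrightarrow> slam k q \<Longrightarrow> slam (j + k) (SApp p q)"
| slam_lam: "slam (Suc i) p \<Longrightarrow> slam i (SLam p)"

text \<open>Linear terms [Gamma]t decorating a skeleton p. Contexts are lists of
  distinct variables; juxtaposition of contexts requires disjointness.\<close>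
inductive deco :: "'v list \<Rightarrow> 'v lterm \<Rightarrow> skel \<Rightarrow> bool" where
  deco_var: "deco [x] (Var x) Hole"
| deco_app: "deco \<Gamma> t p \<Longrightarrow> deco \<Delta> u q \<Longrightarrow> set \<Gamma> \<inter> set \<Delta> = {} \<Longrightarrow>
     deco (\<Gamma> @ \<Delta>) (App t u) (SApp p q)"
| deco_lam: "deco (x # \<Gamma>) t p \<Longrightarrow> deco \<Gamma> (Lam x t) (SLam p)"
| deco_exch: "deco (\<Gamma> @ y # x # \<Delta>) t p \<Longrightarrow> deco (\<Gamma> @ x # y # \<Delta>) t p"

inductive sneu :: "nat \<Rightarrow> skel \<Rightarrow> bool" and snf :: "nat \<Rightarrow> skel \<Rightarrow> bool" where
  sneu_v: "sneu 1 Hole"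
| sneu_a: "sneu j p \<Longrightarrow> snf k q \<Longrightarrow> sneu (j + k) (SApp p q)"
| snf_s: "sneu i p \<Longrightarrow> snf i p"
| snf_l: "snf (Suc i) p \<Longrightarrow> snf i (SLam p)"

definition normal_linear :: "'v list \<Rightarrow> 'v lterm \<Rightarrow> bool" where
  "normal_linear \<Gamma> t \<longleftrightarrow> (\<exists>p. deco \<Gamma> t p \<and> snf (length \<Gamma>) p)"

text \<open>Subterms of t in which the variable x is not rebound (so that an occurrence
  of x in such a subterm refers to the free variable x of t).\<close>
fun subterms_free :: "'v \<Rightarrow> 'v lterm \<Rightarrow> 'v lterm set" where
  "subterms_free x (Var y) = {Var y}"
| "subterms_free x (App a b) = insert (App a b) (subterms_free x a \<union> subterms_free x b)"
| "subterms_free x (Lam y b) = insert (Lam y b) (if y = x then {} else subterms_free x b)"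

definition function_open :: "'v \<Rightarrow> 'v lterm \<Rightarrow> bool" where
  "function_open x t \<longleftrightarrow> (\<exists>u. App (Var x) u \<in> subterms_free x t)"

definition value_open :: "'v \<Rightarrow> 'v lterm \<Rightarrow> bool" where
  "value_open x t \<longleftrightarrow> (\<exists>u. App u (Var x) \<in> subterms_free x t)"

end

theory Submission
  imports Defs
begin

text \<open>Linearity makes the free variable x occur exactly once in t.  If t is not x itself,
  that occurrence sits in an application, either in function or in argument position,
  so t is function-open or value-open; it cannot be both, since an occurrence of
  x(u) and one of v(x) would require two occurrences of x.\<close>

fun free_occs :: "'v \<Rightarrow> 'v lterm \<Rightarrow> nat" where
  "free_occs x (Var y) = (if y = x then 1 else 0)"
| "free_occs x (App a b) = free_occs x a + free_occs x b"
| "free_occs x (Lam y b) = (if y = x then 0 else free_occs x b)"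

lemma deco_distinct: "deco \<Gamma> t p \<Longrightarrow> distinct \<Gamma>"
  by (induction rule: deco.induct) auto

lemma deco_free_occs: "deco \<Gamma> t p \<Longrightarrow> free_occs x t = (if x \<in> set \<Gamma> then 1 else 0)"
proof (induction arbitrary: x rule: deco.induct)
  case (deco_lam y \<Gamma> t p)
  then show ?case using deco_distinct[OF deco_lam.hyps] by auto
qed auto

lemma deco_VarD: "deco \<Gamma> (Var z) p \<Longrightarrow> \<Gamma> = [z]"
  by (induction \<Gamma> "Var z :: 'a lterm" p rule: deco.induct) auto

lemma deco_function_or_value_open:
  assumes "deco \<Gamma> t p" "x \<in> set \<Gamma>" "t \<noteq> Var x"
  shows "function_open x t \<or> value_open x t"
  using assms
proof (induction rule: deco.induct)
  case (deco_app \<Gamma> t p \<Delta> u q)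
  consider "t = Var x" | "u = Var x" | "x \<in> set \<Gamma>" "t \<noteq> Var x" | "x \<in> set \<Delta>" "u \<noteq> Var x"
    using deco_app.prems(1) by auto
  then show ?case
    using deco_app.IH by cases (auto simp: function_open_def value_open_def)
next
  case (deco_lam y \<Gamma> t p)
  have "y \<noteq> x"
    using deco_distinct[OF deco_lam.hyps] deco_lam.prems(1) by auto
  moreover have "t \<noteq> Var x"
    using deco_VarD[of "y # \<Gamma>" x p] deco_lam.hyps \<open>y \<noteq> x\<close> by auto
  ultimately show ?case
    using deco_lam.IH deco_lam.prems(1) by (auto simp: function_open_def value_open_def)
qed auto

lemma free_occs_subterms_free_le: "s \<in> subterms_free x t \<Longrightarrow> free_occs x s \<le> free_occs x t"
  by (induction x t rule: subterms_free.induct) (auto split: if_splits)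

lemma two_le_free_occs_if_function_and_value_open:
  "App (Var x) u \<in> subterms_free x t \<Longrightarrow> App v (Var x) \<in> subterms_free x t \<Longrightarrow>
   2 \<le> free_occs x t"
proof (induction x t rule: subterms_free.induct)
  case (2 x a b)
  have occ: "App (Var x) u \<in> subterms_free x c \<Longrightarrow> 1 \<le> free_occs x c"
    "App v (Var x) \<in> subterms_free x c \<Longrightarrow> 1 \<le> free_occs x c" for c
    using free_occs_subterms_free_le[of _ x c] by force+
  from 2 show ?case
    using occ[of a] occ[of b] by (auto simp del: One_nat_def)
qed (auto split: if_splits)

theorem proposition4p5:
  fixes x :: 'v and t :: "'v lterm"
  assumes "normal_linear [x] t"
  shows "(t = Var x \<and> \<not> function_open x t \<and> \<not> value_open x t)
       \<or> (t \<noteq> Var x \<and> function_open x t \<and> \<not> value_open x t)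
       \<or> (t \<noteq> Var x \<and> \<not> function_open x t \<and> value_open x t)"
proof -
  obtain p where deco: "deco [x] t p"
    using assms unfolding normal_linear_def by blast
  then have "free_occs x t = 1"
    using deco_free_occs by fastforce
  then have not_both: "\<not> (function_open x t \<and> value_open x t)"
    using two_le_free_occs_if_function_and_value_open
    unfolding function_open_def value_open_def by fastforce
  show ?thesis
  proof (cases "t = Var x")
    case True
    then show ?thesis by (simp add: function_open_def value_open_def)
  next
    case False
    then show ?thesis using deco_function_or_value_open[OF deco] not_both by auto
  qed
qed

end
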